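(* The following hold: (1) every reduced ring is NCSUC; (2) every local ring is NCSUC; (3) if $R$ is a domain, then the upper triangular matrix ring $\mathrm{T}_2(R)$ is NCSUC; (4) for any nonzero ring $R$, the matrix ring $\mathrm{M}_2(R)$ is not NCSUC.
   Context: All rings are associative with identity $1$. For a ring $R$, $\mathrm{Id}(R)$, $U(R)$, $\mathrm{Nil}(R)$ denote the sets of idempotents, units and nilpotent elements. An element $a\in R$ is nil-clean if $a=e+q$ with $e\in \mathrm{Id}(R)$, $q\in\mathrm{Nil}(R)$. An element $a$ is uniquely strongly clean if there is exactly one $e\in\mathrm{Id}(R)$ such that $a-e\in U(R)$ and $ae=ea$. A ring is NCSUC if every nil-clean element is uniquely strongly clean. A ring is reduced if it has no nonzero nilpotent elements; a domain is a nonzero ring without zero divisors; $\mathrm{T}_2(R)$ is the ring of $2\times 2$ upper triangular matrices over $R$. *)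

theory Defs
  imports "HOL-Algebra.Ideal"
begin

definition idempotents :: "('a, 'b) ring_scheme \<Rightarrow> 'a set" where
  "idempotents R = {e \<in> carrier R. e \<otimes>\<^bsub>R\<^esub> e = e}"

definition nilpotents :: "('a, 'b) ring_scheme \<Rightarrow> 'a set" where
  "nilpotents R = {q \<in> carrier R. \<exists>n::nat. q [^]\<^bsub>R\<^esub> n = \<zero>\<^bsub>R\<^esub>}"

definition nil_clean_elem :: "('a, 'b) ring_scheme \<Rightarrow> 'a \<Rightarrow> bool" where
  "nil_clean_elem R a \<longleftrightarrow>
     (\<exists>e q. e \<in> idempotents R \<and> q \<in> nilpotents R \<and> a = e \<oplus>\<^bsub>R\<^esub> q)"

definition uniquely_strongly_clean :: "('a, 'b) ring_scheme \<Rightarrow> 'a \<Rightarrow> bool" where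
  "uniquely_strongly_clean R a \<longleftrightarrow>
     (\<exists>!e. e \<in> idempotents R \<and> a \<ominus>\<^bsub>R\<^esub> e \<in> Units R
            \<and> a \<otimes>\<^bsub>R\<^esub> e = e \<otimes>\<^bsub>R\<^esub> a)"

definition NCSUC :: "('a, 'b) ring_scheme \<Rightarrow> bool" where
  "NCSUC R \<longleftrightarrow>
     (\<forall>a \<in> carrier R. nil_clean_elem R a \<longrightarrow> uniquely_strongly_clean R a)"

definition reduced_ring :: "('a, 'b) ring_scheme \<Rightarrow> bool" where
  "reduced_ring R \<longleftrightarrow> nilpotents R \<subseteq> {\<zero>\<^bsub>R\<^esub>}"

definition nc_domain :: "('a, 'b) ring_scheme \<Rightarrow> bool" where
  "nc_domain R \<longleftrightarrow> \<one>\<^bsub>R\<^esub> \<noteq> \<zero>\<^bsub>R\<^esub> \<and>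
     (\<forall>a \<in> carrier R. \<forall>b \<in> carrier R. a \<otimes>\<^bsub>R\<^esub> b = \<zero>\<^bsub>R\<^esub> \<longrightarrow> a = \<zero>\<^bsub>R\<^esub> \<or> b = \<zero>\<^bsub>R\<^esub>)"

definition left_ideal :: "'a set \<Rightarrow> ('a, 'b) ring_scheme \<Rightarrow> bool" where
  "left_ideal I R \<longleftrightarrow> additive_subgroup I R \<and>
     (\<forall>r \<in> carrier R. \<forall>x \<in> I. r \<otimes>\<^bsub>R\<^esub> x \<in> I)"

definition maximal_left_ideal :: "'a set \<Rightarrow> ('a, 'b) ring_scheme \<Rightarrow> bool" where
  "maximal_left_ideal I R \<longleftrightarrow> left_ideal I R \<and> I \<noteq> carrier R \<and>
     (\<forall>J. left_ideal J R \<and> I \<subseteq> J \<longrightarrow> J = I \<or> J = carrier R)"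

definition local_ring :: "('a, 'b) ring_scheme \<Rightarrow> bool" where
  "local_ring R \<longleftrightarrow> (\<exists>!I. maximal_left_ideal I R)"

text \<open>2x2 matrices over R, a matrix (a b; c d) represented as (a, b, c, d).\<close>
definition M2 :: "('a, 'b) ring_scheme \<Rightarrow> ('a \<times> 'a \<times> 'a \<times> 'a) ring" where
  "M2 R = \<lparr> carrier = carrier R \<times> carrier R \<times> carrier R \<times> carrier R,
     mult = (\<lambda>(a, b, c, d) (a', b', c', d').
       (a \<otimes>\<^bsub>R\<^esub> a' \<oplus>\<^bsub>R\<^esub> b \<otimes>\<^bsub>R\<^esub> c', a \<otimes>\<^bsub>R\<^esub> b' \<oplus>\<^bsub>R\<^esub> b \<otimes>\<^bsub>R\<^esub> d',
        c \<otimes>\<^bsub>R\<^esub> a' \<oplus>\<^bsub>R\<^esub> d \<otimes>\<^bsub>R\<^esub> c', c \<otimes>\<^bsub>R\<^esub> b' \<oplus>\<^bsub>R\<^esub> d \<otimes>\<^bsub>R\<^esub> d')),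
     one = (\<one>\<^bsub>R\<^esub>, \<zero>\<^bsub>R\<^esub>, \<zero>\<^bsub>R\<^esub>, \<one>\<^bsub>R\<^esub>),
     zero = (\<zero>\<^bsub>R\<^esub>, \<zero>\<^bsub>R\<^esub>, \<zero>\<^bsub>R\<^esub>, \<zero>\<^bsub>R\<^esub>),
     add = (\<lambda>(a, b, c, d) (a', b', c', d').
       (a \<oplus>\<^bsub>R\<^esub> a', b \<oplus>\<^bsub>R\<^esub> b', c \<oplus>\<^bsub>R\<^esub> c', d \<oplus>\<^bsub>R\<^esub> d')) \<rparr>"

definition T2 :: "('a, 'b) ring_scheme \<Rightarrow> ('a \<times> 'a \<times> 'a \<times> 'a) ring" where
  "T2 R = (M2 R) \<lparr> carrier := carrier R \<times> carrier R \<times> {\<zero>\<^bsub>R\<^esub>} \<times> carrier R \<rparr>"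

end

theory Submission
  imports Defs "HOL-Algebra.Multiplicative_Group"
begin

text \<open>If \<open>a\<close> is idempotent, \<open>1 - a\<close> is the only idempotent \<open>g\<close> commuting with \<open>a\<close> for which
  \<open>a - g\<close> is a unit: the unit \<open>a - g\<close> kills \<open>a g\<close> and \<open>1 - a - g\<close>. In a reduced ring every
  nil-clean element is idempotent. If the only idempotents are \<open>0\<close> and \<open>1\<close> (local rings, via
  Zorn's lemma, and domains), a nil-clean \<open>a = e + q\<close> has \<open>a - (1 - e) = \<plusminus>(1 \<mp> q)\<close> a unit while
  \<open>a - e = q\<close> is not. Over a domain the diagonal of a nil-clean upper triangular matrix consists of
  \<open>0\<close>s and \<open>1\<close>s, which forces the diagonal of a strongly clean idempotent, and idempotence and
  commutation then force its corner. In \<open>M\<^sub>2(R)\<close> the nil-clean matrix \<open>(1, 1; 1, 0)\<close> and its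
  difference with the identity are both invertible, so \<open>0\<close> and \<open>1\<close> both qualify.\<close>

section \<open>Units, nilpotents and idempotents\<close>

lemma (in ring) Units_mult_eq_zero:
  assumes "u \<in> Units R" "x \<in> carrier R" "u \<otimes> x = \<zero>" shows "x = \<zero>"
  using assms by (metis Units_closed Units_l_cancel r_null zero_closed)

lemma (in ring) Units_a_inv_closed:
  assumes "u \<in> Units R" shows "\<ominus> u \<in> Units R"
proof -
  have "\<ominus> u = \<ominus> \<one> \<otimes> u" using assms by (simp add: l_minus Units_closed)
  then show ?thesis using assms Units_minus_one_closed by simp
qed

lemma (in ring) zero_not_Units: "\<one> \<noteq> \<zero> \<Longrightarrow> \<zero> \<notin> Units R"
  by (metis Units_r_inv_ex l_null zero_closed)

lemma (in ring) nat_pow_a_inv: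
  assumes "x \<in> carrier R"
  shows "(\<ominus> x) [^] (n::nat) = (if even n then x [^] n else \<ominus> (x [^] n))"
  using assms by (induction n) (auto simp: l_minus r_minus)

lemma (in ring) a_inv_nilpotent:
  assumes "q \<in> nilpotents R" shows "\<ominus> q \<in> nilpotents R"
  using assms by (auto simp: nilpotents_def nat_pow_a_inv)

lemma (in ring) nilpotent_not_Units:
  assumes "\<one> \<noteq> \<zero>" "q \<in> nilpotents R" shows "q \<notin> Units R"
proof
  assume "q \<in> Units R"
  moreover obtain n where "q [^] (n::nat) = \<zero>" using assms(2) by (auto simp: nilpotents_def)
  ultimately have "\<zero> \<in> Units R" by (metis Units_pow_closed)
  then show False using zero_not_Units[OF assms(1)] by simp
qed

lemma (in ring) one_minus_nilpotent_Units:
  assumes "q \<in> nilpotents R" shows "\<one> \<ominus> q \<in> Units R"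
proof -
  obtain n where q: "q \<in> carrier R" "q [^] (n::nat) = \<zero>" using assms by (auto simp: nilpotents_def)
  have step: "(\<one> \<ominus> q) \<oplus> q \<otimes> (\<one> \<ominus> p) = \<one> \<ominus> q \<otimes> p" if "p \<in> carrier R" for p
    using q(1) that by (algebra; simp add: ring_simprules)
  \<comment> \<open>\<open>g = 1 + q + \<dots> + q\<^sup>k\<^sup>-\<^sup>1\<close>, built as \<open>1 + q g\<close>\<close>
  have "\<exists>g \<in> carrier R. (\<one> \<ominus> q) \<otimes> g = \<one> \<ominus> q [^] k \<and> g \<otimes> (\<one> \<ominus> q) = \<one> \<ominus> q [^] k" for k :: nat
  proof (induction k)
    case 0
    show ?case using q by (intro bexI[of _ \<zero>]) (auto simp: a_minus_def r_neg)
  next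
    case (Suc k)
    then obtain g where g: "g \<in> carrier R" "(\<one> \<ominus> q) \<otimes> g = \<one> \<ominus> q [^] k" "g \<otimes> (\<one> \<ominus> q) = \<one> \<ominus> q [^] k"
      by blast
    have "(\<one> \<ominus> q) \<otimes> (\<one> \<oplus> q \<otimes> g) = (\<one> \<ominus> q) \<oplus> q \<otimes> ((\<one> \<ominus> q) \<otimes> g)"
      using q(1) g(1) by (algebra; simp add: ring_simprules)
    also have "\<dots> = (\<one> \<ominus> q) \<oplus> q \<otimes> (\<one> \<ominus> q [^] k)" by (simp only: g(2))
    also have "\<dots> = \<one> \<ominus> q [^] Suc k" unfolding nat_pow_Suc2[OF q(1)] by (rule step) (simp add: q(1))
    finally have right: "(\<one> \<ominus> q) \<otimes> (\<one> \<oplus> q \<otimes> g) = \<one> \<ominus> q [^] Suc k" .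
    have "(\<one> \<oplus> q \<otimes> g) \<otimes> (\<one> \<ominus> q) = (\<one> \<ominus> q) \<oplus> q \<otimes> (g \<otimes> (\<one> \<ominus> q))"
      using q(1) g(1) by (algebra; simp add: ring_simprules)
    also have "\<dots> = (\<one> \<ominus> q) \<oplus> q \<otimes> (\<one> \<ominus> q [^] k)" by (simp only: g(3))
    also have "\<dots> = \<one> \<ominus> q [^] Suc k" unfolding nat_pow_Suc2[OF q(1)] by (rule step) (simp add: q(1))
    finally have left: "(\<one> \<oplus> q \<otimes> g) \<otimes> (\<one> \<ominus> q) = \<one> \<ominus> q [^] Suc k" .
    from right left show ?case using q g by blast
  qed
  moreover have "\<one> \<ominus> q [^] n = \<one>" using q by (simp add: a_minus_def)
  ultimately obtain g where "g \<in> carrier R" "(\<one> \<ominus> q) \<otimes> g = \<one>" "g \<otimes> (\<one> \<ominus> q) = \<one>"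
    by metis
  then show ?thesis using q(1) unfolding Units_def by auto
qed

lemma (in ring) one_minus_idempotent:
  assumes "e \<in> idempotents R" shows "\<one> \<ominus> e \<in> idempotents R"
proof -
  have e: "e \<in> carrier R" "e \<otimes> e = e" using assms by (auto simp: idempotents_def)
  have "(\<one> \<ominus> e) \<otimes> (\<one> \<ominus> e) = \<one> \<ominus> e \<ominus> e \<oplus> e \<otimes> e"
    using e(1) by (algebra; simp add: ring_simprules)
  also have "\<dots> = \<one> \<ominus> e" using e by (algebra; simp add: ring_simprules)
  finally show ?thesis using e(1) by (simp add: idempotents_def)
qed

lemma (in ring) idempotent_uniquely_strongly_clean:
  assumes "a \<in> idempotents R" shows "uniquely_strongly_clean R a"
  unfolding uniquely_strongly_clean_def
proof (rule ex1I[of _ "\<one> \<ominus> a"], intro conjI)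
  have a: "a \<in> carrier R" "a \<otimes> a = a" using assms by (auto simp: idempotents_def)
  show "\<one> \<ominus> a \<in> idempotents R" using one_minus_idempotent[OF assms] .
  have "(a \<ominus> (\<one> \<ominus> a)) \<otimes> (a \<ominus> (\<one> \<ominus> a)) = \<one> \<oplus> (a \<otimes> a \<ominus> a) \<oplus> (a \<otimes> a \<ominus> a) \<oplus> (a \<otimes> a \<ominus> a) \<oplus> (a \<otimes> a \<ominus> a)"
    using a(1) by (algebra; simp add: ring_simprules)
  also have "\<dots> = \<one>" using a by (simp add: a_minus_def r_neg)
  finally show "a \<ominus> (\<one> \<ominus> a) \<in> Units R" using a(1) unfolding Units_def by auto
  show "a \<otimes> (\<one> \<ominus> a) = (\<one> \<ominus> a) \<otimes> a" using a(1) by (algebra; simp add: ring_simprules)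
next
  fix g assume "g \<in> idempotents R \<and> a \<ominus> g \<in> Units R \<and> a \<otimes> g = g \<otimes> a"
  then have g: "g \<in> carrier R" "g \<otimes> g = g" "a \<ominus> g \<in> Units R" "g \<otimes> a = a \<otimes> g"
    by (auto simp: idempotents_def)
  have a: "a \<in> carrier R" "a \<otimes> a = a" using assms by (auto simp: idempotents_def)
  have aag: "a \<otimes> (a \<otimes> g) = a \<otimes> g" and gag: "g \<otimes> (a \<otimes> g) = a \<otimes> g"
    using a g by (simp_all add: m_assoc[symmetric]) (simp add: m_assoc)
  have "(a \<ominus> g) \<otimes> (a \<otimes> g) = \<zero>"
    using a(1) g(1) aag gag by (simp add: a_minus_def l_distr l_minus r_neg)
  then have ag: "a \<otimes> g = \<zero>" using Units_mult_eq_zero[OF g(3)] a(1) g(1) by simp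
  have "(a \<ominus> g) \<otimes> (\<one> \<ominus> a \<ominus> g) = (a \<ominus> a \<otimes> a) \<ominus> a \<otimes> g \<oplus> g \<otimes> a \<ominus> (g \<ominus> g \<otimes> g)"
    using a(1) g(1) by (algebra; simp add: ring_simprules)
  also have "\<dots> = \<zero>" using a g ag by (simp add: a_minus_def r_neg)
  finally have "\<one> \<ominus> a \<ominus> g = \<zero>" using Units_mult_eq_zero[OF g(3)] a(1) g(1) by simp
  then show "g = \<one> \<ominus> a" using a g by (metis minus_closed one_closed r_right_minus_eq)
qed

lemma (in ring) reduced_ring_NCSUC:
  assumes "reduced_ring R" shows "NCSUC R"
  unfolding NCSUC_def
proof (intro ballI impI)
  fix a assume "nil_clean_elem R a"
  then obtain e q where "e \<in> idempotents R" "q \<in> nilpotents R" "a = e \<oplus> q"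
    by (auto simp: nil_clean_elem_def)
  moreover from this assms have "q = \<zero>" by (auto simp: reduced_ring_def)
  ultimately show "uniquely_strongly_clean R a"
    using idempotent_uniquely_strongly_clean by (simp add: idempotents_def)
qed

lemma (in ring) trivial_idempotents_NCSUC:
  assumes nontrivial: "\<one> \<noteq> \<zero>" and trivial: "idempotents R \<subseteq> {\<zero>, \<one>}"
  shows "NCSUC R"
  unfolding NCSUC_def
proof (intro ballI impI)
  fix a assume a: "a \<in> carrier R" "nil_clean_elem R a"
  then obtain e q where e: "e \<in> idempotents R" and q: "q \<in> nilpotents R" and "a = e \<oplus> q"
    by (auto simp: nil_clean_elem_def)
  have qc: "q \<in> carrier R" using q by (simp add: nilpotents_def)
  have e01: "e = \<zero> \<or> e = \<one>" using e trivial by auto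
  have idem01: "\<zero> \<in> idempotents R" "\<one> \<in> idempotents R" by (auto simp: idempotents_def)
  define f where "f = (if e = \<zero> then \<one> else \<zero>)"
  \<comment> \<open>\<open>a - f\<close> is \<open>-(1 - q)\<close> or \<open>1 - (-q)\<close>, while \<open>a - e = q\<close> is not a unit\<close>
  have "a \<ominus> f \<in> Units R"
  proof (cases "e = \<zero>")
    case True
    then have "a \<ominus> f = \<ominus> (\<one> \<ominus> q)" using \<open>a = e \<oplus> q\<close> qc
      by (simp add: f_def a_minus_def minus_add a_comm)
    then show ?thesis using Units_a_inv_closed[OF one_minus_nilpotent_Units[OF q]] by simp
  next
    case False
    then have "a \<ominus> f = \<one> \<ominus> \<ominus> q" using \<open>a = e \<oplus> q\<close> e01 qc by (simp add: f_def a_minus_def)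
    then show ?thesis using one_minus_nilpotent_Units[OF a_inv_nilpotent[OF q]] by simp
  qed
  moreover have "a \<ominus> e = q"
    using \<open>a = e \<oplus> q\<close> e qc by (simp add: idempotents_def a_minus_def a_assoc a_lcomm[of e q] r_neg)
  then have "a \<ominus> e \<notin> Units R" using nilpotent_not_Units[OF nontrivial q] by simp
  ultimately show "uniquely_strongly_clean R a"
    unfolding uniquely_strongly_clean_def using a(1) trivial idem01 e01 nontrivial
    by (intro ex1I[of _ f]) (auto simp: f_def)
qed

section \<open>Left ideals and local rings\<close>

lemma (in ring) left_idealI:
  assumes "I \<subseteq> carrier R" "\<zero> \<in> I"
    and "\<And>x y. x \<in> I \<Longrightarrow> y \<in> I \<Longrightarrow> x \<oplus> y \<in> I"
    and "\<And>r x. r \<in> carrier R \<Longrightarrow> x \<in> I \<Longrightarrow> r \<otimes> x \<in> I"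
  shows "left_ideal I R"
proof -
  have "\<ominus> x \<in> I" if "x \<in> I" for x
  proof -
    have "\<ominus> x = \<ominus> \<one> \<otimes> x" using that assms(1) by (auto simp: l_minus)
    then show ?thesis using assms(4) that by simp
  qed
  then have "additive_subgroup I R"
    by (intro additive_subgroupI add.subgroupI) (use assms in \<open>auto simp: a_inv_def[symmetric]\<close>)
  then show ?thesis using assms(4) by (simp add: left_ideal_def)
qed

lemma (in ring) left_ideal_eq_carrier:
  assumes "left_ideal I R" "\<one> \<in> I" shows "I = carrier R"
proof
  show "I \<subseteq> carrier R" using assms(1) by (simp add: left_ideal_def additive_subgroup.a_subset)
  show "carrier R \<subseteq> I" using assms by (metis left_ideal_def r_one subsetI)
qed

lemma (in ring) left_ideal_principal:
  assumes "x \<in> carrier R" shows "left_ideal ((\<lambda>r. r \<otimes> x) ` carrier R) R"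
proof (rule left_idealI)
  show "\<zero> \<in> (\<lambda>r. r \<otimes> x) ` carrier R" using assms by (intro image_eqI[of _ _ \<zero>]) auto
  show "a \<oplus> b \<in> (\<lambda>r. r \<otimes> x) ` carrier R" if "a \<in> (\<lambda>r. r \<otimes> x) ` carrier R" "b \<in> (\<lambda>r. r \<otimes> x) ` carrier R" for a b
    using that assms by (auto simp: l_distr[symmetric] intro!: image_eqI)
  show "r \<otimes> a \<in> (\<lambda>r. r \<otimes> x) ` carrier R" if "r \<in> carrier R" "a \<in> (\<lambda>r. r \<otimes> x) ` carrier R" for r a
    using that assms by (auto simp: m_assoc[symmetric] intro!: image_eqI)
qed (use assms in auto)

lemma (in ring) left_ideal_Union_chain:
  assumes "C \<noteq> {}" "\<And>I. I \<in> C \<Longrightarrow> left_ideal I R" "\<And>I J. I \<in> C \<Longrightarrow> J \<in> C \<Longrightarrow> I \<subseteq> J \<or> J \<subseteq> I"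
  shows "left_ideal (\<Union> C) R"
proof (rule left_idealI)
  have sub: "additive_subgroup I R" if "I \<in> C" for I using assms(2)[OF that] by (simp add: left_ideal_def)
  show "\<Union> C \<subseteq> carrier R" using sub additive_subgroup.a_subset by blast
  show "\<zero> \<in> \<Union> C" using assms(1) sub additive_subgroup.zero_closed by blast
  show "x \<oplus> y \<in> \<Union> C" if xy: "x \<in> \<Union> C" "y \<in> \<Union> C" for x y
  proof -
    obtain I J where "I \<in> C" "J \<in> C" "x \<in> I" "y \<in> J" using xy by blast
    with assms(3) sub show ?thesis by (meson UnionI additive_subgroup.a_closed subsetD)
  qed
  show "r \<otimes> x \<in> \<Union> C" if "r \<in> carrier R" "x \<in> \<Union> C" for r x
    using that assms(2) by (auto simp: left_ideal_def)
qed

lemma (in ring) exists_maximal_left_ideal: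
  assumes "left_ideal J R" "\<one> \<notin> J"
  shows "\<exists>M. maximal_left_ideal M R \<and> J \<subseteq> M"
proof -
  define A where "A = {I. left_ideal I R \<and> J \<subseteq> I \<and> \<one> \<notin> I}"
  have "\<exists>M\<in>A. \<forall>X\<in>A. M \<subseteq> X \<longrightarrow> X = M"
  proof (rule subset_Zorn_nonempty)
    show "A \<noteq> {}" using assms unfolding A_def by auto
  next
    fix C assume C: "C \<noteq> {}" "subset.chain A C"
    then have "C \<subseteq> A" "\<And>I J. I \<in> C \<Longrightarrow> J \<in> C \<Longrightarrow> I \<subseteq> J \<or> J \<subseteq> I"
      by (auto simp: pred_on.chain_def)
    then have "left_ideal (\<Union> C) R" using C(1) left_ideal_Union_chain unfolding A_def by blast
    moreover have "J \<subseteq> \<Union> C" "\<one> \<notin> \<Union> C" using \<open>C \<subseteq> A\<close> C(1) unfolding A_def by auto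
    ultimately show "\<Union> C \<in> A" unfolding A_def by blast
  qed
  then obtain M where "M \<in> A" and max: "\<And>X. X \<in> A \<Longrightarrow> M \<subseteq> X \<Longrightarrow> X = M" by blast
  then have M: "left_ideal M R" "J \<subseteq> M" "\<one> \<notin> M" unfolding A_def by auto
  have "X = M \<or> X = carrier R" if "left_ideal X R" "M \<subseteq> X" for X
  proof (cases "\<one> \<in> X")
    case True
    then show ?thesis using left_ideal_eq_carrier that(1) by blast
  next
    case False
    with that M(2) have "X \<in> A" unfolding A_def by auto
    then show ?thesis using max that(2) by blast
  qed
  then have "maximal_left_ideal M R" using M unfolding maximal_left_ideal_def by auto
  with M(2) show ?thesis by blast
qed

lemma (in ring) local_ring_one_neq_zero:
  assumes "local_ring R" shows "\<one> \<noteq> \<zero>"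
proof
  assume "\<one> = \<zero>"
  obtain M where "maximal_left_ideal M R" using assms by (auto simp: local_ring_def)
  then have "left_ideal M R" "M \<noteq> carrier R" by (auto simp: maximal_left_ideal_def)
  moreover from this have "\<one> \<in> M"
    using \<open>\<one> = \<zero>\<close> by (simp add: left_ideal_def additive_subgroup.zero_closed)
  ultimately show False using left_ideal_eq_carrier by blast
qed

lemma (in ring) local_ring_idempotent_mem_maximal:
  assumes "local_ring R" "maximal_left_ideal M R" "e \<in> idempotents R" "e \<noteq> \<one>"
  shows "e \<in> M"
proof -
  have e: "e \<in> carrier R" "e \<otimes> e = e" using assms(3) by (auto simp: idempotents_def)
  have "\<one> \<notin> (\<lambda>r. r \<otimes> e) ` carrier R"
  proof
    assume "\<one> \<in> (\<lambda>r. r \<otimes> e) ` carrier R"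
    then obtain r where r: "r \<in> carrier R" "r \<otimes> e = \<one>" by auto
    have "e = (r \<otimes> e) \<otimes> e" by (simp only: r(2) l_one[OF e(1)])
    also have "\<dots> = r \<otimes> e" by (simp only: m_assoc[OF r(1) e(1) e(1)] e(2))
    finally show False using assms(4) r by simp
  qed
  then obtain M' where "maximal_left_ideal M' R" "(\<lambda>r. r \<otimes> e) ` carrier R \<subseteq> M'"
    using exists_maximal_left_ideal[OF left_ideal_principal[OF e(1)]] by blast
  moreover have "M' = M" using assms(1,2) \<open>maximal_left_ideal M' R\<close> by (auto simp: local_ring_def)
  moreover have "e \<in> (\<lambda>r. r \<otimes> e) ` carrier R" using e by (intro image_eqI[of _ _ \<one>]) auto
  ultimately show ?thesis by blast
qed

lemma (in ring) local_ring_idempotents: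
  assumes "local_ring R" shows "idempotents R \<subseteq> {\<zero>, \<one>}"
proof
  fix e assume e: "e \<in> idempotents R"
  show "e \<in> {\<zero>, \<one>}"
  proof (rule ccontr)
    assume "e \<notin> {\<zero>, \<one>}"
    have ec: "e \<in> carrier R" using e by (simp add: idempotents_def)
    obtain M where M: "maximal_left_ideal M R" using assms by (auto simp: local_ring_def)
    \<comment> \<open>both \<open>e\<close> and \<open>1 - e\<close> lie in the unique maximal left ideal, hence so does \<open>1\<close>\<close>
    have sum: "\<one> \<ominus> e \<oplus> e = \<one>" using ec by (algebra; simp add: ring_simprules)
    then have "\<one> \<ominus> e \<noteq> \<one>" using \<open>e \<notin> {\<zero>, \<one>}\<close> ec add.l_cancel_one[of \<one> e] by auto
    then have "e \<in> M" "\<one> \<ominus> e \<in> M"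
      using \<open>e \<notin> {\<zero>, \<one>}\<close> local_ring_idempotent_mem_maximal[OF assms M] e one_minus_idempotent by auto
    then have "\<one> \<ominus> e \<oplus> e \<in> M"
      using M by (simp add: maximal_left_ideal_def left_ideal_def additive_subgroup.a_closed)
    then show False using M sum left_ideal_eq_carrier by (auto simp: maximal_left_ideal_def)
  qed
qed

lemma (in ring) local_ring_NCSUC: "local_ring R \<Longrightarrow> NCSUC R"
  using trivial_idempotents_NCSUC local_ring_one_neq_zero local_ring_idempotents by blast

section \<open>Domains and upper triangular matrices\<close>

lemma (in ring) nc_domain_idempotents:
  assumes "nc_domain R" shows "idempotents R \<subseteq> {\<zero>, \<one>}"
proof
  fix e assume "e \<in> idempotents R"
  then have e: "e \<in> carrier R" "e \<otimes> e = e" by (auto simp: idempotents_def)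
  have "e \<otimes> (e \<ominus> \<one>) = e \<otimes> e \<ominus> e" using e(1) by (algebra; simp add: ring_simprules)
  then have "e \<otimes> (e \<ominus> \<one>) = \<zero>" using e by simp
  then have "e = \<zero> \<or> e \<ominus> \<one> = \<zero>"
    using assms e(1) unfolding nc_domain_def by (meson minus_closed one_closed)
  then show "e \<in> {\<zero>, \<one>}" using e(1) by auto
qed

lemma (in ring) nc_domain_reduced:
  assumes "nc_domain R" shows "reduced_ring R"
proof -
  have "x [^] (n::nat) = \<zero> \<Longrightarrow> x = \<zero>" if "x \<in> carrier R" for x n
    using that assms by (induction n) (auto simp: nc_domain_def)
  then show ?thesis by (auto simp: reduced_ring_def nilpotents_def)
qed

lemma M2_carrier: "carrier (M2 R) = carrier R \<times> carrier R \<times> carrier R \<times> carrier R"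
  and M2_zero: "\<zero>\<^bsub>M2 R\<^esub> = (\<zero>\<^bsub>R\<^esub>, \<zero>\<^bsub>R\<^esub>, \<zero>\<^bsub>R\<^esub>, \<zero>\<^bsub>R\<^esub>)"
  and M2_one: "\<one>\<^bsub>M2 R\<^esub> = (\<one>\<^bsub>R\<^esub>, \<zero>\<^bsub>R\<^esub>, \<zero>\<^bsub>R\<^esub>, \<one>\<^bsub>R\<^esub>)"
  and M2_add: "(a, b, c, d) \<oplus>\<^bsub>M2 R\<^esub> (a', b', c', d') = (a \<oplus>\<^bsub>R\<^esub> a', b \<oplus>\<^bsub>R\<^esub> b', c \<oplus>\<^bsub>R\<^esub> c', d \<oplus>\<^bsub>R\<^esub> d')"
  and M2_mult: "(a, b, c, d) \<otimes>\<^bsub>M2 R\<^esub> (a', b', c', d') =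
       (a \<otimes>\<^bsub>R\<^esub> a' \<oplus>\<^bsub>R\<^esub> b \<otimes>\<^bsub>R\<^esub> c', a \<otimes>\<^bsub>R\<^esub> b' \<oplus>\<^bsub>R\<^esub> b \<otimes>\<^bsub>R\<^esub> d',
        c \<otimes>\<^bsub>R\<^esub> a' \<oplus>\<^bsub>R\<^esub> d \<otimes>\<^bsub>R\<^esub> c', c \<otimes>\<^bsub>R\<^esub> b' \<oplus>\<^bsub>R\<^esub> d \<otimes>\<^bsub>R\<^esub> d')"
  by (simp_all add: M2_def)

lemma T2_carrier: "carrier (T2 R) = carrier R \<times> carrier R \<times> {\<zero>\<^bsub>R\<^esub>} \<times> carrier R"
  and T2_zero: "\<zero>\<^bsub>T2 R\<^esub> = \<zero>\<^bsub>M2 R\<^esub>"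
  and T2_one: "\<one>\<^bsub>T2 R\<^esub> = \<one>\<^bsub>M2 R\<^esub>"
  and T2_add: "add (T2 R) = add (M2 R)"
  and T2_mult: "mult (T2 R) = mult (M2 R)"
  by (simp_all add: T2_def M2_def)

text \<open>The additive inverse is a definite description over the carrier, so it has to be computed
  separately for \<open>M2 R\<close> and for its subring \<open>T2 R\<close>.\<close>

lemma a_inv_eqI:
  assumes "w \<in> carrier S" "x \<oplus>\<^bsub>S\<^esub> w = \<zero>\<^bsub>S\<^esub>" "w \<oplus>\<^bsub>S\<^esub> x = \<zero>\<^bsub>S\<^esub>"
    and "\<And>y. y \<in> carrier S \<Longrightarrow> x \<oplus>\<^bsub>S\<^esub> y = \<zero>\<^bsub>S\<^esub> \<Longrightarrow> y = w"
  shows "\<ominus>\<^bsub>S\<^esub> x = w"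
  unfolding a_inv_def m_inv_def
proof (rule the_equality)
  fix y assume "y \<in> carrier (add_monoid S) \<and> x \<otimes>\<^bsub>add_monoid S\<^esub> y = \<one>\<^bsub>add_monoid S\<^esub>
    \<and> y \<otimes>\<^bsub>add_monoid S\<^esub> x = \<one>\<^bsub>add_monoid S\<^esub>"
  then show "y = w" using assms(4) by simp
qed (use assms(1-3) in simp)

lemma (in ring) a_inv_componentwise:
  assumes "carrier S \<subseteq> carrier R \<times> carrier R \<times> carrier R \<times> carrier R"
    and add: "\<And>a b c d a' b' c' d'. (a, b, c, d) \<oplus>\<^bsub>S\<^esub> (a', b', c', d') = (a \<oplus> a', b \<oplus> b', c \<oplus> c', d \<oplus> d')"
    and zero: "\<zero>\<^bsub>S\<^esub> = (\<zero>, \<zero>, \<zero>, \<zero>)"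
    and "(a, b, c, d) \<in> carrier S" "(\<ominus> a, \<ominus> b, \<ominus> c, \<ominus> d) \<in> carrier S"
  shows "\<ominus>\<^bsub>S\<^esub> (a, b, c, d) = (\<ominus> a, \<ominus> b, \<ominus> c, \<ominus> d)"
proof (rule a_inv_eqI)
  have abcd: "a \<in> carrier R" "b \<in> carrier R" "c \<in> carrier R" "d \<in> carrier R" using assms(1,4) by auto
  then show "(a, b, c, d) \<oplus>\<^bsub>S\<^esub> (\<ominus> a, \<ominus> b, \<ominus> c, \<ominus> d) = \<zero>\<^bsub>S\<^esub>"
    and "(\<ominus> a, \<ominus> b, \<ominus> c, \<ominus> d) \<oplus>\<^bsub>S\<^esub> (a, b, c, d) = \<zero>\<^bsub>S\<^esub>"
    by (simp_all add: add zero r_neg l_neg)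
  have neg: "v = \<ominus> u" if "u \<oplus> v = \<zero>" "u \<in> carrier R" "v \<in> carrier R" for u v
    using that by (metis a_comm minus_equality)
  fix y assume y: "y \<in> carrier S" "(a, b, c, d) \<oplus>\<^bsub>S\<^esub> y = \<zero>\<^bsub>S\<^esub>"
  obtain y1 y2 y3 y4 where "y = (y1, y2, y3, y4)" by (cases y)
  with y assms(1) abcd show "y = (\<ominus> a, \<ominus> b, \<ominus> c, \<ominus> d)"
    using neg[of a y1] neg[of b y2] neg[of c y3] neg[of d y4] by (auto simp: add zero)
qed (rule assms(5))

lemma (in ring) M2_a_minus:
  assumes "a \<in> carrier R" "b \<in> carrier R" "c \<in> carrier R" "d \<in> carrier R"
    "a' \<in> carrier R" "b' \<in> carrier R" "c' \<in> carrier R" "d' \<in> carrier R"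
  shows "(a, b, c, d) \<ominus>\<^bsub>M2 R\<^esub> (a', b', c', d') = (a \<ominus> a', b \<ominus> b', c \<ominus> c', d \<ominus> d')"
proof -
  have "\<ominus>\<^bsub>M2 R\<^esub> (a', b', c', d') = (\<ominus> a', \<ominus> b', \<ominus> c', \<ominus> d')"
    using assms a_inv_componentwise[of "M2 R" a' b' c' d'] by (simp add: M2_carrier M2_add M2_zero)
  then show ?thesis using assms by (simp add: a_minus_def M2_add)
qed

lemma (in ring) T2_a_minus:
  assumes "a \<in> carrier R" "b \<in> carrier R" "d \<in> carrier R" "a' \<in> carrier R" "b' \<in> carrier R" "d' \<in> carrier R"
  shows "(a, b, \<zero>, d) \<ominus>\<^bsub>T2 R\<^esub> (a', b', \<zero>, d') = (a \<ominus> a', b \<ominus> b', \<zero>, d \<ominus> d')"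
proof -
  have "\<ominus>\<^bsub>T2 R\<^esub> (a', b', \<zero>, d') = (\<ominus> a', \<ominus> b', \<zero>, \<ominus> d')"
  proof (rule a_inv_componentwise[of "T2 R" a' b' \<zero> d', simplified])
    show "carrier (T2 R) \<subseteq> carrier R \<times> carrier R \<times> carrier R \<times> carrier R" by (auto simp: T2_carrier)
  qed (use assms in \<open>simp_all add: T2_carrier T2_add T2_zero M2_add M2_zero\<close>)
  then show ?thesis using assms by (simp add: a_minus_def T2_add M2_add)
qed

lemma (in ring) T2_mult_upper:
  assumes "a \<in> carrier R" "b \<in> carrier R" "d \<in> carrier R" "a' \<in> carrier R" "b' \<in> carrier R" "d' \<in> carrier R"
  shows "(a, b, \<zero>, d) \<otimes>\<^bsub>T2 R\<^esub> (a', b', \<zero>, d') = (a \<otimes> a', a \<otimes> b' \<oplus> b \<otimes> d', \<zero>, d \<otimes> d')"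
  using assms by (simp add: T2_mult M2_mult)

lemma (in ring) T2_idempotents_iff:
  "(p, s, c, r) \<in> idempotents (T2 R) \<longleftrightarrow>
     p \<in> idempotents R \<and> r \<in> idempotents R \<and> s \<in> carrier R \<and> c = \<zero> \<and> p \<otimes> s \<oplus> s \<otimes> r = s"
  by (auto simp: idempotents_def T2_carrier T2_mult_upper)

lemma (in ring) T2_Units_iff:
  "(a, b, c, d) \<in> Units (T2 R) \<longleftrightarrow> a \<in> Units R \<and> d \<in> Units R \<and> b \<in> carrier R \<and> c = \<zero>"
proof
  assume "(a, b, c, d) \<in> Units (T2 R)"
  then obtain x where x: "x \<in> carrier (T2 R)" "x \<otimes>\<^bsub>T2 R\<^esub> (a, b, c, d) = \<one>\<^bsub>T2 R\<^esub>"
      "(a, b, c, d) \<otimes>\<^bsub>T2 R\<^esub> x = \<one>\<^bsub>T2 R\<^esub>" and abcd: "(a, b, c, d) \<in> carrier (T2 R)"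
    unfolding Units_def by blast
  obtain x1 x2 x4 where "x = (x1, x2, \<zero>, x4)" "x1 \<in> carrier R" "x2 \<in> carrier R" "x4 \<in> carrier R"
    using x(1) by (auto simp: T2_carrier)
  with x abcd show "a \<in> Units R \<and> d \<in> Units R \<and> b \<in> carrier R \<and> c = \<zero>"
    by (auto simp: T2_carrier T2_mult_upper T2_one M2_one Units_def)
next
  assume "a \<in> Units R \<and> d \<in> Units R \<and> b \<in> carrier R \<and> c = \<zero>"
  then have a: "a \<in> Units R" and d: "d \<in> Units R" and b: "b \<in> carrier R" and c: "c = \<zero>" by auto
  \<comment> \<open>the inverse of \<open>(a, b; 0, d)\<close> is \<open>(a\<inverse>, -a\<inverse> b d\<inverse>; 0, d\<inverse>)\<close>\<close>
  define w where "w = \<ominus> (inv a \<otimes> b \<otimes> inv d)"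
  have w: "w \<in> carrier R" using a b d by (simp add: w_def)
  have "a \<otimes> w \<oplus> b \<otimes> inv d = \<zero>"
    using a b d by (simp add: w_def r_minus m_assoc[symmetric] Units_closed r_neg1 l_neg)
  moreover have "inv a \<otimes> b \<oplus> w \<otimes> d = \<zero>"
    using a b d by (simp add: w_def l_minus m_assoc Units_closed r_neg)
  ultimately have "(a, b, \<zero>, d) \<otimes>\<^bsub>T2 R\<^esub> (inv a, w, \<zero>, inv d) = \<one>\<^bsub>T2 R\<^esub>"
    "(inv a, w, \<zero>, inv d) \<otimes>\<^bsub>T2 R\<^esub> (a, b, \<zero>, d) = \<one>\<^bsub>T2 R\<^esub>"
    using a b d w by (simp_all add: T2_mult_upper T2_one M2_one Units_closed)
  moreover have "(a, b, \<zero>, d) \<in> carrier (T2 R)" "(inv a, w, \<zero>, inv d) \<in> carrier (T2 R)"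
    using a b d w by (auto simp: T2_carrier)
  ultimately show "(a, b, c, d) \<in> Units (T2 R)" unfolding Units_def c by blast
qed

lemma (in ring) T2_nat_pow:
  assumes "a \<in> carrier R" "b \<in> carrier R" "d \<in> carrier R"
  shows "\<exists>y \<in> carrier R. (a, b, \<zero>, d) [^]\<^bsub>T2 R\<^esub> (n::nat) = (a [^] n, y, \<zero>, d [^] n)"
proof (induction n)
  case 0
  show ?case by (auto simp: T2_one M2_one)
next
  case (Suc n)
  then obtain y where y: "y \<in> carrier R" "(a, b, \<zero>, d) [^]\<^bsub>T2 R\<^esub> n = (a [^] n, y, \<zero>, d [^] n)" by blast
  then have "(a, b, \<zero>, d) [^]\<^bsub>T2 R\<^esub> Suc n = (a [^] n \<otimes> a, a [^] n \<otimes> b \<oplus> y \<otimes> d, \<zero>, d [^] n \<otimes> d)"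
    using assms by (simp add: T2_mult_upper)
  then show ?case using y assms by auto
qed

lemma (in ring) T2_nilpotents:
  assumes "(a, b, c, d) \<in> nilpotents (T2 R)"
  shows "a \<in> nilpotents R" "d \<in> nilpotents R" "b \<in> carrier R" "c = \<zero>"
proof -
  obtain n where abcd: "a \<in> carrier R" "b \<in> carrier R" "c = \<zero>" "d \<in> carrier R"
    and "(a, b, c, d) [^]\<^bsub>T2 R\<^esub> (n::nat) = \<zero>\<^bsub>T2 R\<^esub>"
    using assms by (auto simp: nilpotents_def T2_carrier)
  with T2_nat_pow[of a b d n] have "a [^] n = \<zero>" "d [^] n = \<zero>" by (auto simp: T2_zero M2_zero)
  with abcd show "a \<in> nilpotents R" "d \<in> nilpotents R" "b \<in> carrier R" "c = \<zero>"
    by (auto simp: nilpotents_def)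
qed

lemma (in ring) eq_one_minus_if_diff_Units:
  assumes "\<one> \<noteq> \<zero>" "x \<in> {\<zero>, \<one>}" "p \<in> {\<zero>, \<one>}" "x \<ominus> p \<in> Units R"
  shows "p = \<one> \<ominus> x"
proof -
  have "x \<noteq> p" using assms zero_not_Units by (auto simp: a_minus_def r_neg)
  then show ?thesis using assms(1-3) by (auto simp: a_minus_def r_neg)
qed

lemma (in ring) T2_strongly_clean_entries_iff:
  assumes D: "nc_domain R" and x: "x \<in> {\<zero>, \<one>}" and z: "z \<in> {\<zero>, \<one>}" and y: "y \<in> carrier R"
  shows "p \<in> idempotents R \<and> r \<in> idempotents R \<and> s \<in> carrier R \<and> c = \<zero> \<and> p \<otimes> s \<oplus> s \<otimes> r = s
      \<and> x \<ominus> p \<in> Units R \<and> z \<ominus> r \<in> Units R \<and> x \<otimes> s \<oplus> y \<otimes> r = p \<otimes> y \<oplus> s \<otimes> z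
    \<longleftrightarrow> p = \<one> \<ominus> x \<and> r = \<one> \<ominus> z \<and> c = \<zero> \<and> s = (if x = z then \<zero> else \<ominus> y)"
    (is "?L \<longleftrightarrow> ?R")
proof
  have nz: "\<one> \<noteq> \<zero>" using D by (simp add: nc_domain_def)
  assume ?L
  then have "p \<in> {\<zero>, \<one>}" "r \<in> {\<zero>, \<one>}" using nc_domain_idempotents[OF D] by auto
  with \<open>?L\<close> have p: "p = \<one> \<ominus> x" and r: "r = \<one> \<ominus> z"
    using eq_one_minus_if_diff_Units[OF nz x] eq_one_minus_if_diff_Units[OF nz z] by auto
  have "s = (if x = z then \<zero> else \<ominus> y)"
    using \<open>?L\<close> x z y add.l_cancel_one[of s s] unfolding p r
    by (auto simp: a_minus_def r_neg a_comm minus_equality)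
  then show ?R using \<open>?L\<close> p r by simp
next
  have nz: "\<one> \<noteq> \<zero>" using D by (simp add: nc_domain_def)
  assume ?R
  with x z y nz show ?L
    by (cases "x = \<zero>"; cases "z = \<zero>") (auto simp: idempotents_def a_minus_def r_neg l_neg)
qed

lemma (in ring) T2_strongly_clean_idempotent_iff:
  assumes D: "nc_domain R" and x: "x \<in> {\<zero>, \<one>}" and z: "z \<in> {\<zero>, \<one>}" and y: "y \<in> carrier R"
  defines "A \<equiv> (x, y, \<zero>, z)"
  shows "F \<in> idempotents (T2 R) \<and> A \<ominus>\<^bsub>T2 R\<^esub> F \<in> Units (T2 R) \<and> A \<otimes>\<^bsub>T2 R\<^esub> F = F \<otimes>\<^bsub>T2 R\<^esub> A
     \<longleftrightarrow> F = (\<one> \<ominus> x, if x = z then \<zero> else \<ominus> y, \<zero>, \<one> \<ominus> z)"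
proof -
  obtain p s c r where F: "F = (p, s, c, r)" by (cases F)
  have xc: "x \<in> carrier R" and zc: "z \<in> carrier R" using x z by auto
  show ?thesis
  proof (cases "p \<in> carrier R \<and> r \<in> carrier R \<and> s \<in> carrier R \<and> c = \<zero>")
    case True
    then have "A \<ominus>\<^bsub>T2 R\<^esub> F = (x \<ominus> p, y \<ominus> s, \<zero>, z \<ominus> r)"
      and "A \<otimes>\<^bsub>T2 R\<^esub> F = (x \<otimes> p, x \<otimes> s \<oplus> y \<otimes> r, \<zero>, z \<otimes> r)"
      and "F \<otimes>\<^bsub>T2 R\<^esub> A = (p \<otimes> x, p \<otimes> y \<oplus> s \<otimes> z, \<zero>, r \<otimes> z)"
      using xc zc y by (simp_all add: A_def F T2_a_minus T2_mult_upper)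
    moreover have "x \<otimes> p = p \<otimes> x" "z \<otimes> r = r \<otimes> z"
      if "p \<in> idempotents R" "r \<in> idempotents R"
      using that x z nc_domain_idempotents[OF D] by auto
    ultimately show ?thesis
      using T2_strongly_clean_entries_iff[OF D x z y, of p r s c] True y xc zc
      by (auto simp: F T2_idempotents_iff T2_Units_iff)
  next
    case False
    then have "F \<notin> idempotents (T2 R)" unfolding F T2_idempotents_iff by (auto simp: idempotents_def)
    moreover have "F \<noteq> (\<one> \<ominus> x, if x = z then \<zero> else \<ominus> y, \<zero>, \<one> \<ominus> z)"
      using False xc zc y by (auto simp: F)
    ultimately show ?thesis by blast
  qed
qed

lemma (in ring) nc_domain_T2_NCSUC:
  assumes D: "nc_domain R" shows "NCSUC (T2 R)"
  unfolding NCSUC_def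
proof (intro ballI impI)
  fix A assume "nil_clean_elem (T2 R) A"
  then obtain e1 e2 e3 e4 q1 q2 q3 q4 where
    E: "(e1, e2, e3, e4) \<in> idempotents (T2 R)" and Q: "(q1, q2, q3, q4) \<in> nilpotents (T2 R)"
    and A: "A = (e1, e2, e3, e4) \<oplus>\<^bsub>T2 R\<^esub> (q1, q2, q3, q4)"
    unfolding nil_clean_elem_def by (metis prod_cases4)
  have e: "e1 \<in> {\<zero>, \<one>}" "e4 \<in> {\<zero>, \<one>}" "e2 \<in> carrier R" "e3 = \<zero>"
    using E nc_domain_idempotents[OF D] by (auto simp: T2_idempotents_iff)
  have "q1 \<in> nilpotents R" "q4 \<in> nilpotents R" and q: "q2 \<in> carrier R" "q3 = \<zero>"
    using T2_nilpotents[OF Q] by auto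
  then have "q1 = \<zero>" "q4 = \<zero>" using nc_domain_reduced[OF D] by (auto simp: reduced_ring_def)
  with e q have "A = (e1, e2 \<oplus> q2, \<zero>, e4)" using A by (auto simp: T2_add M2_add)
  moreover have "e2 \<oplus> q2 \<in> carrier R" using e q by simp
  ultimately show "uniquely_strongly_clean (T2 R) A"
    unfolding uniquely_strongly_clean_def using T2_strongly_clean_idempotent_iff[OF D e(1,2)] by simp
qed

section \<open>Full matrix rings\<close>

lemma (in ring) M2_not_NCSUC:
  assumes "\<one> \<noteq> \<zero>" shows "\<not> NCSUC (M2 R)"
proof
  \<comment> \<open>\<open>A = (1, 1; 1, 0)\<close> is the idempotent \<open>(1, 1; 0, 0)\<close> plus the square-zero \<open>(0, 0; 1, 0)\<close>,
    yet both \<open>A - 0\<close> and \<open>A - 1\<close> are units\<close>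
  define A where "A = (\<one>, \<one>, \<one>, \<zero>)"
  define B where "B = (\<zero>, \<one>, \<one>, \<ominus> \<one>)"
  have AB: "A \<otimes>\<^bsub>M2 R\<^esub> B = \<one>\<^bsub>M2 R\<^esub>" "B \<otimes>\<^bsub>M2 R\<^esub> A = \<one>\<^bsub>M2 R\<^esub>"
    by (simp_all add: A_def B_def M2_mult M2_one l_neg r_neg)
  have carr: "A \<in> carrier (M2 R)" "B \<in> carrier (M2 R)" by (simp_all add: A_def B_def M2_carrier)
  have "A = (\<one>, \<one>, \<zero>, \<zero>) \<oplus>\<^bsub>M2 R\<^esub> (\<zero>, \<zero>, \<one>, \<zero>)" by (simp add: A_def M2_add)
  moreover have "(\<one>, \<one>, \<zero>, \<zero>) \<in> idempotents (M2 R)"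
    by (simp add: idempotents_def M2_carrier M2_mult)
  moreover have "(\<zero>, \<zero>, \<one>, \<zero>) [^]\<^bsub>M2 R\<^esub> (2::nat) = \<zero>\<^bsub>M2 R\<^esub>"
    by (simp add: numeral_2_eq_2 M2_mult M2_one M2_zero)
  then have "(\<zero>, \<zero>, \<one>, \<zero>) \<in> nilpotents (M2 R)" unfolding nilpotents_def M2_carrier by blast
  ultimately have "nil_clean_elem (M2 R) A" unfolding nil_clean_elem_def by blast
  moreover assume "NCSUC (M2 R)"
  ultimately have "uniquely_strongly_clean (M2 R) A" using carr unfolding NCSUC_def by blast
  moreover have "A \<ominus>\<^bsub>M2 R\<^esub> \<zero>\<^bsub>M2 R\<^esub> = A"
    unfolding A_def M2_zero by (subst M2_a_minus) (simp_all add: a_minus_def)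
  moreover have "A \<ominus>\<^bsub>M2 R\<^esub> \<one>\<^bsub>M2 R\<^esub> = B"
    unfolding A_def B_def M2_one by (subst M2_a_minus) (simp_all add: a_minus_def r_neg)
  moreover have "A \<in> Units (M2 R)" "B \<in> Units (M2 R)" using AB carr unfolding Units_def by blast+
  moreover have "\<zero>\<^bsub>M2 R\<^esub> \<in> idempotents (M2 R)" "\<one>\<^bsub>M2 R\<^esub> \<in> idempotents (M2 R)"
    by (simp_all add: idempotents_def M2_zero M2_one M2_mult M2_carrier)
  moreover have "A \<otimes>\<^bsub>M2 R\<^esub> \<zero>\<^bsub>M2 R\<^esub> = \<zero>\<^bsub>M2 R\<^esub> \<otimes>\<^bsub>M2 R\<^esub> A" "A \<otimes>\<^bsub>M2 R\<^esub> \<one>\<^bsub>M2 R\<^esub> = \<one>\<^bsub>M2 R\<^esub> \<otimes>\<^bsub>M2 R\<^esub> A"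
    by (simp_all add: A_def M2_zero M2_one M2_mult)
  moreover have "\<zero>\<^bsub>M2 R\<^esub> \<noteq> \<one>\<^bsub>M2 R\<^esub>" using assms by (simp add: M2_zero M2_one)
  ultimately show False unfolding uniquely_strongly_clean_def by metis
qed

theorem mainTheorem19:
  shows "(\<forall>R :: ('a, 'b) ring_scheme. ring R \<and> reduced_ring R \<longrightarrow> NCSUC R)
       \<and> (\<forall>R :: ('c, 'd) ring_scheme. ring R \<and> local_ring R \<longrightarrow> NCSUC R)
       \<and> (\<forall>R :: ('e, 'f) ring_scheme. ring R \<and> nc_domain R \<longrightarrow> NCSUC (T2 R))
       \<and> (\<forall>R :: ('g, 'h) ring_scheme. ring R \<and> \<one>\<^bsub>R\<^esub> \<noteq> \<zero>\<^bsub>R\<^esub> \<longrightarrow> \<not> NCSUC (M2 R))"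
  using ring.reduced_ring_NCSUC ring.local_ring_NCSUC ring.nc_domain_T2_NCSUC ring.M2_not_NCSUC
  by blast

end
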